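(* Let $a>0$ and let $\mathcal{Q}$ be the Brownian fan kernel $$\mathcal{Q}(w,\cdot)=\frac a2\int_{\mathfrak{s}(w)}^{\mathfrak{e}(w)}\Theta_{w,\tau}^\star\mathbf{Q}\,d\tau,\qquad w\in\mathcal{E}.$$ For $\eta>0$ define $F(w)=e^{-\eta\mathfrak{s}(w)}\bigl(1-e^{-\eta|\mathfrak{l}(w)|}\bigr)$, where $|\mathfrak{l}(w)|=\mathfrak{e}(w)-\mathfrak{s}(w)$. Then, provided $\eta$ is large enough, there exists $c<1$ such that $\int_{\mathcal{E}}F(\tilde w)\,\mathcal{Q}(w,d\tilde w)\le cF(w)$ for every $w\in\mathcal{E}$.
   Context: An excursion is a triple $w=(s,t,y)$ with $s\in\mathbb{R}$, $t\in\mathbb{R}\cup\{+\infty\}$, $s<t$, and $y\in C(\mathbb{R},\mathbb{R})$ with $y_\tau=y_t$ for $\tau\ge t$ and $y_\tau=y_s$ for $\tau\le s$; write $\mathfrak{s}(w)=s$, $\mathfrak{e}(w)=t$, $\mathfrak{l}(w)=[s,t]$, $w_\tau=y_\tau$, and $\mathcal{E}$ for the set of excursions. $\mathbf{Q}$ is Itô's Brownian excursion measure, viewed as a $\sigma$-finite measure on excursions with $\mathfrak{s}=0$ starting from $0$, normalised so that $\mathbf{Q}=\lim_{\varepsilon\to0}\varepsilon^{-1}\mathbf{Q}_\varepsilon$ with $\mathbf{Q}_\varepsilon$ the law of a standard Brownian motion started at $\varepsilon$ and killed when hitting $0$; under $\mathbf{Q}$ the lifetime $\mathfrak{e}(w)$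 has density $s^{-3/2}/\sqrt{2\pi}$ on $(0,\infty)$. For $w\in\mathcal{E}$ and $\tau\in\mathbb{R}$, $\Theta_{w,\tau}$ is the map on excursions which translates an excursion in time and space so that its starting point (time $0$, position $0$) is moved to the point (time $\tau$, position $w_\tau$). *)

theory Defs
  imports "HOL-Analysis.Analysis"
begin

type_synonym excursion = "real \<times> ereal \<times> (real \<Rightarrow> real)"

definition exc_start :: "excursion \<Rightarrow> real" where
  "exc_start w = fst w"

definition exc_end :: "excursion \<Rightarrow> ereal" where
  "exc_end w = fst (snd w)"

definition exc_path :: "excursion \<Rightarrow> real \<Rightarrow> real" where
  "exc_path w = snd (snd w)"

definition is_excursion :: "excursion \<Rightarrow> bool" where
  "is_excursion w \<longleftrightarrow>
     ereal (exc_start w) < exc_end w \<and>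
     continuous_on UNIV (exc_path w) \<and>
     (\<forall>\<tau>. exc_end w \<le> ereal \<tau> \<longrightarrow> exc_path w \<tau> = exc_path w (real_of_ereal (exc_end w))) \<and>
     (\<forall>\<tau>. \<tau> \<le> exc_start w \<longrightarrow> exc_path w \<tau> = exc_path w (exc_start w))"

definition Excursions :: "excursion set" where
  "Excursions = {w. is_excursion w}"

definition Theta :: "excursion \<Rightarrow> real \<Rightarrow> excursion \<Rightarrow> excursion" where
  "Theta w \<tau> v = (\<tau> + exc_start v, ereal \<tau> + exc_end v,
                   (\<lambda>r. exc_path w \<tau> + exc_path v (r - \<tau>)))"

text \<open>F(w) = exp(-eta s(w)) (1 - exp(-eta |l(w)|)), with |l(w)| = e(w) - s(w)
  (so that the second factor is 1 when e(w) = +infinity).\<close>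
definition F_fun :: "real \<Rightarrow> excursion \<Rightarrow> real" where
  "F_fun \<eta> w = exp (- \<eta> * exc_start w) *
     (1 - (if exc_end w = \<infinity> then 0
           else exp (- \<eta> * (real_of_ereal (exc_end w) - exc_start w))))"

text \<open>Integral of a nonnegative function f against the Brownian fan kernel
  Q(w, .) = (a/2) int_{s(w)}^{e(w)} (Theta_{w,tau})_* Q dtau, i.e.
  int f(v') Q(w,dv') = (a/2) int_{s(w)}^{e(w)} int f(Theta_{w,tau} v) Q(dv) dtau.\<close>
definition fan_integral ::
  "real \<Rightarrow> excursion measure \<Rightarrow> excursion \<Rightarrow> (excursion \<Rightarrow> ennreal) \<Rightarrow> ennreal" where
  "fan_integral a Q w f =
     ennreal (a / 2) *
     (\<integral>\<^sup>+ \<tau>. indicator {\<tau>. ereal (exc_start w) \<le> ereal \<tau> \<and> ereal \<tau> \<le> exc_end w} \<tau> *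
               (\<integral>\<^sup>+ v. f (Theta w \<tau> v) \<partial>Q) \<partial>lborel)"

text \<open>Abstract description of Ito's Brownian excursion measure used here:
  a measure on excursions with start time 0, starting at 0, finite lifetime,
  whose lifetime has density s^(-3/2)/sqrt(2 pi) on (0,infinity).\<close>
definition ito_lifetime_law :: "excursion measure \<Rightarrow> bool" where
  "ito_lifetime_law Q \<longleftrightarrow>
     space Q \<subseteq> {v \<in> Excursions. exc_start v = 0 \<and> exc_path v 0 = 0 \<and> exc_end v \<noteq> \<infinity>} \<and>
     (\<lambda>v. real_of_ereal (exc_end v)) \<in> borel_measurable Q \<and>
     distr Q lborel (\<lambda>v. real_of_ereal (exc_end v)) =
       density lborel (\<lambda>x. if 0 < x then ennreal (x powr (-3/2) / sqrt (2 * pi)) else 0)"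

end

theory Submission
  imports Defs
begin

text \<open>The weight F is multiplicative under the shifts: F (Theta w tau v) = e^(-eta tau) F v,
  and under Q it is 1 - e^(-eta r) with r the lifetime. The fan integral of F therefore
  factorises as (a/2) (F w / eta) times the integral of (1 - e^(-eta r)) r^(-3/2) / sqrt (2 pi)
  over r > 0. Bounding 1 - e^(-eta r) by eta r for r \<le> 1/eta and by 1 beyond shows that
  this integral is at most 4 sqrt eta, so c = 2a / sqrt eta works once eta > 4a^2.\<close>

definition ito_density :: "real \<Rightarrow> ennreal" where
  "ito_density x = (if 0 < x then ennreal (x powr (-3/2) / sqrt (2 * pi)) else 0)"

lemma F_fun_nonneg:
  assumes "w \<in> Excursions" and "0 \<le> \<eta>"
  shows "0 \<le> F_fun \<eta> w"
proof -
  have "ereal (exc_start w) < exc_end w"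
    using assms(1) by (simp add: Excursions_def is_excursion_def)
  with assms(2) show ?thesis
    by (cases "exc_end w") (auto simp: F_fun_def mult_nonneg_nonneg)
qed

lemma F_fun_Theta:
  assumes "exc_end v \<noteq> -\<infinity>"
  shows "F_fun \<eta> (Theta w \<tau> v) = exp (- \<eta> * \<tau>) * F_fun \<eta> v"
  using assms
  by (cases "exc_end v")
     (auto simp: F_fun_def Theta_def exc_start_def exc_end_def algebra_simps simp flip: exp_add)

lemma F_fun_ito_excursion:
  assumes "ito_lifetime_law Q" and "v \<in> space Q"
  shows "F_fun \<eta> v = 1 - exp (- \<eta> * real_of_ereal (exc_end v))"
    and "exc_end v \<noteq> -\<infinity>"
proof -
  have v: "v \<in> Excursions" "exc_start v = 0" "exc_end v \<noteq> \<infinity>"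
    using assms unfolding ito_lifetime_law_def by auto
  then have "ereal 0 < exc_end v" by (simp add: Excursions_def is_excursion_def)
  with v show "F_fun \<eta> v = 1 - exp (- \<eta> * real_of_ereal (exc_end v))" "exc_end v \<noteq> -\<infinity>"
    by (cases "exc_end v"; simp add: F_fun_def)+
qed

lemma nn_integral_F_fun_ito:
  assumes Q: "ito_lifetime_law Q"
  shows "(\<lambda>v. ennreal (F_fun \<eta> v)) \<in> borel_measurable Q"
    and "(\<integral>\<^sup>+v. ennreal (F_fun \<eta> v) \<partial>Q) = (\<integral>\<^sup>+x. ito_density x * ennreal (1 - exp (- \<eta> * x)) \<partial>lborel)"
proof -
  define L where "L v = real_of_ereal (exc_end v)" for v
  have L: "L \<in> measurable Q lborel"
    and D: "distr Q lborel L = density lborel ito_density"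
    using Q unfolding ito_lifetime_law_def ito_density_def L_def by auto
  have g: "(\<lambda>x::real. ennreal (1 - exp (- \<eta> * x))) \<in> borel_measurable lborel" by measurable
  have F: "ennreal (F_fun \<eta> v) = ennreal (1 - exp (- \<eta> * L v))" if "v \<in> space Q" for v
    using F_fun_ito_excursion(1)[OF Q that] by (simp add: L_def)
  show "(\<lambda>v. ennreal (F_fun \<eta> v)) \<in> borel_measurable Q"
    using measurable_compose[OF L g] by (rule measurable_cong[THEN iffD1, rotated]) (simp add: F)
  have "(\<integral>\<^sup>+v. ennreal (F_fun \<eta> v) \<partial>Q) = (\<integral>\<^sup>+v. ennreal (1 - exp (- \<eta> * L v)) \<partial>Q)"
    by (rule nn_integral_cong) (simp add: F)
  also have "\<dots> = (\<integral>\<^sup>+x. ennreal (1 - exp (- \<eta> * x)) \<partial>distr Q lborel L)"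
    using L g by (simp add: nn_integral_distr)
  also have "\<dots> = (\<integral>\<^sup>+x. ito_density x * ennreal (1 - exp (- \<eta> * x)) \<partial>lborel)"
    unfolding D by (rule nn_integral_density) (unfold ito_density_def, measurable)
  finally show "(\<integral>\<^sup>+v. ennreal (F_fun \<eta> v) \<partial>Q) = \<dots>" .
qed

lemma nn_integral_F_fun_Theta:
  assumes Q: "ito_lifetime_law Q"
  shows "(\<integral>\<^sup>+v. ennreal (F_fun \<eta> (Theta w \<tau> v)) \<partial>Q)
           = ennreal (exp (- \<eta> * \<tau>)) * (\<integral>\<^sup>+x. ito_density x * ennreal (1 - exp (- \<eta> * x)) \<partial>lborel)"
proof -
  have "(\<integral>\<^sup>+v. ennreal (F_fun \<eta> (Theta w \<tau> v)) \<partial>Q) = (\<integral>\<^sup>+v. ennreal (exp (- \<eta> * \<tau>)) * ennreal (F_fun \<eta> v) \<partial>Q)"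
    by (rule nn_integral_cong)
       (simp add: F_fun_Theta F_fun_ito_excursion(2)[OF Q] ennreal_mult')
  also have "\<dots> = ennreal (exp (- \<eta> * \<tau>)) * (\<integral>\<^sup>+v. ennreal (F_fun \<eta> v) \<partial>Q)"
    using nn_integral_F_fun_ito(1)[OF Q] by (rule nn_integral_cmult)
  finally show ?thesis by (simp add: nn_integral_F_fun_ito(2)[OF Q])
qed

lemma nn_integral_exp_excursion_interval:
  assumes "0 < \<eta>" and w: "w \<in> Excursions"
  shows "(\<integral>\<^sup>+\<tau>. ennreal (exp (- \<eta> * \<tau>)) *
             indicator {\<tau>. ereal (exc_start w) \<le> ereal \<tau> \<and> ereal \<tau> \<le> exc_end w} \<tau> \<partial>lborel)
           = ennreal (F_fun \<eta> w / \<eta>)"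
proof -
  define s where "s = exc_start w"
  have "ereal s < exc_end w" using w by (simp add: Excursions_def is_excursion_def s_def)
  then consider t where "exc_end w = ereal t" "s < t" | "exc_end w = \<infinity>"
    by (cases "exc_end w") auto
  then show ?thesis
  proof cases
    case (1 t)
    have "{\<tau>. ereal (exc_start w) \<le> ereal \<tau> \<and> ereal \<tau> \<le> exc_end w} = {s..t}"
      using 1 by (auto simp: s_def)
    moreover have "((\<lambda>\<tau>. exp (- \<eta> * \<tau>)) has_integral F_fun \<eta> w / \<eta>) {s..t}"
    proof -
      have "((\<lambda>\<tau>. exp (- \<eta> * \<tau>)) has_integral (- exp (- \<eta> * t) / \<eta> - (- exp (- \<eta> * s) / \<eta>))) {s..t}"
        using 1 \<open>0 < \<eta>\<close>
        by (intro fundamental_theorem_of_calculus)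
           (auto intro!: derivative_eq_intros simp flip: has_real_derivative_iff_has_vector_derivative)
      moreover have "F_fun \<eta> w = exp (- \<eta> * s) - exp (- \<eta> * t)"
        using 1 by (simp add: F_fun_def s_def algebra_simps flip: exp_add)
      ultimately show ?thesis by (simp add: diff_divide_distrib)
    qed
    ultimately show ?thesis
      by (simp add: nn_integral_has_integral_lebesgue')
  next
    case 2
    have "{\<tau>. ereal (exc_start w) \<le> ereal \<tau> \<and> ereal \<tau> \<le> exc_end w} = {s..}"
      using 2 by (auto simp: s_def)
    moreover have "F_fun \<eta> w = exp (- \<eta> * s)" using 2 by (simp add: F_fun_def s_def)
    ultimately show ?thesis
      using has_integral_exp_minus_to_infinity[OF \<open>0 < \<eta>\<close>, of s]
      by (simp add: nn_integral_has_integral_lebesgue')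
  qed
qed

lemma fan_integral_F_fun:
  assumes Q: "ito_lifetime_law Q" and "0 < \<eta>" and w: "w \<in> Excursions"
  shows "fan_integral a Q w (\<lambda>v. ennreal (F_fun \<eta> v))
           = ennreal (a / 2) * ennreal (F_fun \<eta> w / \<eta>) *
             (\<integral>\<^sup>+x. ito_density x * ennreal (1 - exp (- \<eta> * x)) \<partial>lborel)"
proof -
  define S where "S = {\<tau>. ereal (exc_start w) \<le> ereal \<tau> \<and> ereal \<tau> \<le> exc_end w}"
  define J where "J = (\<integral>\<^sup>+x. ito_density x * ennreal (1 - exp (- \<eta> * x)) \<partial>lborel)"
  have "S \<in> sets borel" unfolding S_def by measurable
  then have "(\<lambda>\<tau>. ennreal (exp (- \<eta> * \<tau>)) * indicator S \<tau>) \<in> borel_measurable lborel"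
    by measurable
  then have "(\<integral>\<^sup>+\<tau>. (ennreal (exp (- \<eta> * \<tau>)) * indicator S \<tau>) * J \<partial>lborel) = ennreal (F_fun \<eta> w / \<eta>) * J"
    using nn_integral_exp_excursion_interval[OF \<open>0 < \<eta>\<close> w]
    by (simp add: nn_integral_multc S_def)
  then show ?thesis
    using nn_integral_F_fun_Theta[OF Q]
    by (simp add: fan_integral_def S_def J_def mult_ac)
qed

lemma ito_density_one_minus_exp_le:
  assumes "0 < \<eta>"
  shows "ito_density x * ennreal (1 - exp (- \<eta> * x))
           \<le> ennreal (\<eta> * x powr (-1/2)) * indicator {0..1/\<eta>} x + ennreal (x powr (-3/2)) * indicator {1/\<eta>..} x"
proof (cases "0 < x")
  case True
  have "1 \<le> sqrt (2 * pi)" using pi_gt3 by (simp add: real_le_rsqrt)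
  then have dens: "x powr (-3/2) / sqrt (2 * pi) \<le> x powr (-3/2)"
    by (simp add: divide_le_eq mult_le_cancel_left1)
  have tail: "0 \<le> 1 - exp (- \<eta> * x)" "1 - exp (- \<eta> * x) \<le> 1" "1 - exp (- \<eta> * x) \<le> \<eta> * x"
    using True assms exp_ge_add_one_self[of "- \<eta> * x"] by auto
  have lhs: "ito_density x * ennreal (1 - exp (- \<eta> * x)) = ennreal (x powr (-3/2) / sqrt (2 * pi) * (1 - exp (- \<eta> * x)))"
    unfolding ito_density_def using True by (simp only: if_True ennreal_mult''[OF tail(1)])
  show ?thesis
  proof (cases "x \<le> 1/\<eta>")
    case True
    have "x powr (-3/2) / sqrt (2 * pi) * (1 - exp (- \<eta> * x)) \<le> x powr (-3/2) * (\<eta> * x)"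
      using dens tail by (intro mult_mono) auto
    also have "\<dots> = \<eta> * x powr (-1/2)"
      using \<open>0 < x\<close> powr_add[of x "-3/2" 1] by simp
    finally have "ennreal (x powr (-3/2) / sqrt (2 * pi) * (1 - exp (- \<eta> * x))) \<le> ennreal (\<eta> * x powr (-1/2))"
      by (rule ennreal_leI)
    then show ?thesis
      unfolding lhs using True \<open>0 < x\<close> by (simp add: add_increasing2)
  next
    case False
    have "x powr (-3/2) / sqrt (2 * pi) * (1 - exp (- \<eta> * x)) \<le> x powr (-3/2) * 1"
      using dens tail by (intro mult_mono) auto
    then show ?thesis
      unfolding lhs using False by (simp add: ennreal_leI)
  qed
qed (simp add: ito_density_def)

lemma nn_integral_ito_density_one_minus_exp_le:
  assumes "0 < \<eta>"
  shows "(\<integral>\<^sup>+x. ito_density x * ennreal (1 - exp (- \<eta> * x)) \<partial>lborel) \<le> ennreal (4 * sqrt \<eta>)"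
proof -
  define b where "b = 1 / \<eta>"
  have "0 < b" using assms by (simp add: b_def)
  have below: "((\<lambda>x. \<eta> * x powr (-1/2)) has_integral 2 * sqrt \<eta>) {0..b}"
  proof -
    have "((\<lambda>x. \<eta> * x powr (-1/2)) has_integral \<eta> * (b powr (-1/2 + 1) / (-1/2 + 1))) {0..b}"
      using \<open>0 < b\<close> by (intro has_integral_mult_right has_integral_powr_from_0) auto
    moreover have "\<eta> * (b powr (-1/2 + 1) / (-1/2 + 1)) = 2 * sqrt \<eta>"
      using assms by (simp add: b_def powr_half_sqrt real_sqrt_divide divide_eq_eq)
    ultimately show ?thesis by metis
  qed
  have above: "((\<lambda>x. x powr (-3/2)) has_integral 2 * sqrt \<eta>) {b..}"
  proof -
    have "((\<lambda>x. x powr (-3/2)) has_integral - (b powr (-3/2 + 1)) / (-3/2 + 1)) {b..}"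
      using \<open>0 < b\<close> by (intro has_integral_powr_to_inf) auto
    moreover have "- (b powr (-3/2 + 1)) / (-3/2 + 1) = 2 * sqrt \<eta>"
      using assms by (simp add: b_def powr_minus_divide powr_half_sqrt real_sqrt_divide powr_divide)
    ultimately show ?thesis by metis
  qed
  have "(\<integral>\<^sup>+x. ito_density x * ennreal (1 - exp (- \<eta> * x)) \<partial>lborel)
      \<le> (\<integral>\<^sup>+x. ennreal (\<eta> * x powr (-1/2)) * indicator {0..b} x + ennreal (x powr (-3/2)) * indicator {b..} x \<partial>lborel)"
    unfolding b_def by (intro nn_integral_mono ito_density_one_minus_exp_le assms)
  also have "\<dots> = (\<integral>\<^sup>+x. ennreal (\<eta> * x powr (-1/2)) * indicator {0..b} x \<partial>lborel)
                  + (\<integral>\<^sup>+x. ennreal (x powr (-3/2)) * indicator {b..} x \<partial>lborel)"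
    by (rule nn_integral_add) auto
  also have "\<dots> = ennreal (2 * sqrt \<eta>) + ennreal (2 * sqrt \<eta>)"
    using nn_integral_has_integral_lebesgue'[OF _ below] nn_integral_has_integral_lebesgue'[OF _ above]
      assms by simp
  also have "\<dots> = ennreal (4 * sqrt \<eta>)"
    using assms by (subst ennreal_plus[symmetric]) auto
  finally show ?thesis .
qed

theorem proposition2p13:
  fixes a :: real and Q :: "excursion measure"
  assumes "a > 0"
    and "ito_lifetime_law Q"
  shows "\<exists>\<eta>0. \<forall>\<eta>\<ge>\<eta>0. \<eta> > 0 \<longrightarrow>
           (\<exists>c. 0 \<le> c \<and> c < 1 \<and>
              (\<forall>w\<in>Excursions.
                 fan_integral a Q w (\<lambda>v. ennreal (F_fun \<eta> v)) \<le> ennreal (c * F_fun \<eta> w)))"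
proof (rule exI[of _ "4 * a^2 + 1"], intro allI impI)
  fix \<eta> :: real
  assume "4 * a^2 + 1 \<le> \<eta>" and "0 < \<eta>"
  define c where "c = 2 * a / sqrt \<eta>"
  have "2 * a < sqrt \<eta>"
    using \<open>4 * a^2 + 1 \<le> \<eta>\<close> \<open>a > 0\<close> by (intro real_less_rsqrt) (simp add: power_mult_distrib)
  then have "0 \<le> c" "c < 1" using \<open>a > 0\<close> \<open>0 < \<eta>\<close> by (auto simp: c_def)
  moreover have "fan_integral a Q w (\<lambda>v. ennreal (F_fun \<eta> v)) \<le> ennreal (c * F_fun \<eta> w)"
    if w: "w \<in> Excursions" for w
  proof -
    have F: "0 \<le> F_fun \<eta> w" using F_fun_nonneg[OF w] \<open>0 < \<eta>\<close> by simp
    have "fan_integral a Q w (\<lambda>v. ennreal (F_fun \<eta> v))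
        \<le> ennreal (a / 2) * ennreal (F_fun \<eta> w / \<eta>) * ennreal (4 * sqrt \<eta>)"
      unfolding fan_integral_F_fun[OF assms(2) \<open>0 < \<eta>\<close> w]
      by (intro mult_left_mono nn_integral_ito_density_one_minus_exp_le \<open>0 < \<eta>\<close>) simp
    also have "\<dots> = ennreal (a / 2 * (F_fun \<eta> w / \<eta>) * (4 * sqrt \<eta>))"
    proof -
      have "0 \<le> a / 2" "0 \<le> a / 2 * (F_fun \<eta> w / \<eta>)" using F \<open>a > 0\<close> \<open>0 < \<eta>\<close> by simp_all
      then show ?thesis by (simp only: ennreal_mult')
    qed
    also have "a / 2 * (F_fun \<eta> w / \<eta>) * (4 * sqrt \<eta>) = c * F_fun \<eta> w"
      using \<open>0 < \<eta>\<close> by (simp add: c_def field_simps real_div_sqrt)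
    finally show ?thesis .
  qed
  ultimately show "\<exists>c. 0 \<le> c \<and> c < 1 \<and> (\<forall>w\<in>Excursions.
                     fan_integral a Q w (\<lambda>v. ennreal (F_fun \<eta> v)) \<le> ennreal (c * F_fun \<eta> w))"
    by blast
qed

end
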